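(* Let $D=\sum_{\rho\in\Sigma}n_\rho D_\rho$ and $\Pi\subseteq\Sigma$. Then the set $C^{ss}_\Pi$ is nonempty if and only if the set $C^s_\Pi$ is nonempty.
   Context: $N\cong\mathbb{Z}^d$, $M=\operatorname{Hom}(N,\mathbb{Z})$, $M_\mathbb{R}=M\otimes\mathbb{R}$, $\sigma\subset N_\mathbb{R}$ a strongly convex rational polyhedral cone of dimension $d$, $\Sigma=\sigma(1)$ its set of rays with primitive generators $n(\rho)$, $(n_\rho)\in\mathbb{Z}^\Sigma$. $C^{ss}_\Pi=\{m\in M_\mathbb{R}:\langle m,n(\rho)\rangle<-n_\rho\ (\rho\in\Pi),\ \langle m,n(\rho)\rangle\ge-n_\rho\ (\rho\in\Sigma\setminus\Pi)\}$ and $C^s_\Pi$ is defined by the same inequalities with all inequalities strict ($>$ for $\rho\in\Sigma\setminus\Pi$). *)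

theory Defs
  imports "HOL-Analysis.Analysis"
begin

text \<open>N = Z^d is the lattice of integer points of real^'n (d = CARD('n));
  M_R is identified with real^'n via the standard inner product.\<close>

definition lattice_pts :: "(real^'n) set" where
  "lattice_pts = {x. \<forall>i. x $ i \<in> \<int>}"

definition conic_span :: "(real^'n) set \<Rightarrow> (real^'n) set" where
  "conic_span S = {(\<Sum>x\<in>S. c x *\<^sub>R x) | c. \<forall>x\<in>S. c x \<ge> 0}"

definition rational_polyhedral_cone :: "(real^'n) set \<Rightarrow> bool" where
  "rational_polyhedral_cone \<sigma> \<longleftrightarrow>
     (\<exists>S. finite S \<and> S \<subseteq> lattice_pts \<and> \<sigma> = conic_span S)"

definition strongly_convex :: "(real^'n) set \<Rightarrow> bool" where
  "strongly_convex \<sigma> \<longleftrightarrow> \<sigma> \<inter> uminus ` \<sigma> = {0}"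

definition rays :: "(real^'n) set \<Rightarrow> (real^'n) set set" where
  "rays \<sigma> = {\<rho>. \<rho> face_of \<sigma> \<and> aff_dim \<rho> = 1}"

definition prim_gen :: "(real^'n) set \<Rightarrow> real^'n" where
  "prim_gen \<rho> = (THE u. u \<in> \<rho> \<and> u \<in> lattice_pts \<and> u \<noteq> 0 \<and>
      (\<forall>v \<in> \<rho> \<inter> lattice_pts. \<exists>k::nat. v = real k *\<^sub>R u))"

definition C_ss :: "(real^'n) set \<Rightarrow> ((real^'n) set \<Rightarrow> int) \<Rightarrow> (real^'n) set set \<Rightarrow> (real^'n) set" where
  "C_ss \<sigma> nr Pi_set = {m. (\<forall>\<rho>\<in>Pi_set. m \<bullet> prim_gen \<rho> < - of_int (nr \<rho>)) \<and>
                      (\<forall>\<rho>\<in>rays \<sigma> - Pi_set. m \<bullet> prim_gen \<rho> \<ge> - of_int (nr \<rho>))}"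

definition C_s :: "(real^'n) set \<Rightarrow> ((real^'n) set \<Rightarrow> int) \<Rightarrow> (real^'n) set set \<Rightarrow> (real^'n) set" where
  "C_s \<sigma> nr Pi_set = {m. (\<forall>\<rho>\<in>Pi_set. m \<bullet> prim_gen \<rho> < - of_int (nr \<rho>)) \<and>
                      (\<forall>\<rho>\<in>rays \<sigma> - Pi_set. m \<bullet> prim_gen \<rho> > - of_int (nr \<rho>))}"

end

theory Submission
  imports Defs
begin

text \<open>Every ray of \<sigma> = cone(S) is the half-line through a nonzero generator s \<in> S, and n(\<rho>)
  is a positive multiple of s. Strong convexity keeps 0 out of the convex hull of S - {0}, so a
  separating functional w has \<langle>w, n(\<rho>)\<rangle> > 0 for every ray \<rho>. Starting from m \<in> C^ss_\<Pi>,
  the point m + \<epsilon> w for small \<epsilon> > 0 keeps the finitely many strict inequalities indexed by \<Pi>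
  and turns the weak ones indexed by \<Sigma> - \<Pi> into strict ones. The converse is the inclusion
  C^s_\<Pi> \<subseteq> C^ss_\<Pi>.\<close>

lemma sum_in_conic_span:
  assumes "finite S" "T \<subseteq> S" "\<forall>x\<in>T. 0 \<le> c x"
  shows "(\<Sum>x\<in>T. c x *\<^sub>R x) \<in> conic_span S"
proof -
  let ?c = "\<lambda>x. if x \<in> T then c x else 0"
  have "(\<Sum>x\<in>T. c x *\<^sub>R x) = (\<Sum>x\<in>S. ?c x *\<^sub>R x)"
    using assms(1,2) by (intro sum.mono_neutral_cong_left) auto
  then show ?thesis
    unfolding conic_span_def using assms(3) by (intro CollectI exI[of _ ?c]) auto
qed

lemma mem_conic_span: "finite S \<Longrightarrow> s \<in> S \<Longrightarrow> s \<in> conic_span S"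
  using sum_in_conic_span[of S "{s}" "\<lambda>_. 1"] by auto

lemma conic_conic_span: "conic (conic_span S)"
  unfolding conic_def conic_span_def
proof (intro allI impI)
  fix x and c :: real
  assume "x \<in> {\<Sum>x\<in>S. c x *\<^sub>R x |c. \<forall>x\<in>S. 0 \<le> c x}" "0 \<le> c"
  then obtain d where d: "x = (\<Sum>x\<in>S. d x *\<^sub>R x)" "\<forall>x\<in>S. 0 \<le> d x" by auto
  have "c *\<^sub>R x = (\<Sum>y\<in>S. (c * d y) *\<^sub>R y)" unfolding d by (simp add: scaleR_sum_right)
  then show "c *\<^sub>R x \<in> {\<Sum>x\<in>S. c x *\<^sub>R x |c. \<forall>x\<in>S. 0 \<le> c x}"
    using d(2) \<open>0 \<le> c\<close> by (intro CollectI exI[of _ "\<lambda>y. c * d y"]) auto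
qed

lemma strongly_convex_minus_mem_imp_zero:
  "strongly_convex \<sigma> \<Longrightarrow> s \<in> \<sigma> \<Longrightarrow> - s \<in> \<sigma> \<Longrightarrow> s = 0"
  unfolding strongly_convex_def by (metis IntI image_eqI minus_minus singletonD)

lemma face_of_conic_span_contains_generator:
  assumes "finite S" and F: "F face_of conic_span S" and x: "x \<in> F" "x \<noteq> 0"
  obtains s where "s \<in> S" "s \<noteq> 0" "s \<in> F"
proof -
  let ?\<sigma> = "conic_span S"
  have "x \<in> ?\<sigma>" using F x face_of_imp_subset by blast
  then obtain c where c: "x = (\<Sum>s\<in>S. c s *\<^sub>R s)" "\<forall>s\<in>S. 0 \<le> c s"
    unfolding conic_span_def by auto
  have "\<exists>s\<in>S. 0 < c s \<and> s \<noteq> 0"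
  proof (rule ccontr)
    assume "\<not> (\<exists>s\<in>S. 0 < c s \<and> s \<noteq> 0)"
    then have "\<forall>s\<in>S. c s *\<^sub>R s = 0" using c(2) by (metis order_le_less scaleR_eq_0_iff)
    then have "x = 0" unfolding c(1) by (intro sum.neutral) blast
    then show False using x(2) by simp
  qed
  then obtain s where s: "s \<in> S" "0 < c s" "s \<noteq> 0" by blast
  \<comment> \<open>x is the midpoint of a = 2 c(s) s and b = 2 y, both in the cone, so a lies in the face.\<close>
  define y where "y = (\<Sum>s'\<in>S - {s}. c s' *\<^sub>R s')"
  define a where "a = (2 * c s) *\<^sub>R s"
  define b where "b = (2::real) *\<^sub>R y"
  have a: "a \<in> ?\<sigma>"
    unfolding a_def using mem_conic_span[OF \<open>finite S\<close> s(1)] s(2)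
    by (intro conic_mul[OF conic_conic_span]) auto
  have "y \<in> ?\<sigma>" unfolding y_def using c(2) \<open>finite S\<close> by (intro sum_in_conic_span) auto
  then have b: "b \<in> ?\<sigma>" unfolding b_def by (intro conic_mul[OF conic_conic_span]) auto
  have x_ab: "x = (1 - 1/2) *\<^sub>R a + (1/2::real) *\<^sub>R b"
    unfolding c(1) y_def a_def b_def using \<open>finite S\<close> s(1) by (simp add: sum.remove)
  have "a \<in> F"
  proof (cases "a = b")
    case True
    then show ?thesis using x_ab x(1) by (simp flip: scaleR_add_left)
  next
    case False
    then have "x \<in> open_segment a b" unfolding in_segment using x_ab
      by (intro conjI exI[of _ "1/2"]) auto
    then show ?thesis using face_ofD[OF F _ a b x(1)] by blast
  qed
  then have "(1 / (2 * c s)) *\<^sub>R a \<in> F"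
    using s(2) by (intro conic_mul[OF face_of_conic[OF conic_conic_span F]]) auto
  then show thesis using that s unfolding a_def by simp
qed

lemma conic_aff_dim_1_eq_halfline:
  assumes "conic \<sigma>" "strongly_convex \<sigma>" and \<rho>: "conic \<rho>" "\<rho> \<subseteq> \<sigma>" "aff_dim \<rho> = 1"
    and s: "s \<in> \<rho>" "s \<noteq> 0"
  shows "\<rho> = {t *\<^sub>R s | t. 0 \<le> t}"
proof (intro set_eqI iffI)
  fix z assume "z \<in> {t *\<^sub>R s | t. 0 \<le> t}"
  then show "z \<in> \<rho>" using conic_mul[OF \<rho>(1) s(1)] by auto
next
  fix z assume z: "z \<in> \<rho>"
  have "0 \<in> \<rho>" using conic_mul[OF \<rho>(1) s(1), of 0] by simp
  then have "affine hull {0, s} \<subseteq> affine hull \<rho>" using s(1) by (intro hull_mono) auto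
  moreover have "aff_dim (affine hull {0, s}) = aff_dim (affine hull \<rho>)"
    using \<rho>(3) s(2) by simp
  ultimately have "affine hull \<rho> = affine hull {0, s}" by (intro affine_dim_equal[symmetric]) auto
  moreover have "z \<in> affine hull \<rho>" using z by (rule hull_inc)
  ultimately obtain v where v: "z = v *\<^sub>R s" unfolding affine_hull_2 by auto
  have "0 \<le> v"
  proof (rule ccontr)
    assume "\<not> 0 \<le> v"
    then have "(- 1 / v) *\<^sub>R z \<in> \<sigma>" using z \<rho>(2) by (intro conic_mul[OF assms(1)]) auto
    then have "- s \<in> \<sigma>" using \<open>\<not> 0 \<le> v\<close> v by simp
    then show False
      using strongly_convex_minus_mem_imp_zero[OF assms(2)] s \<rho>(2) by blast
  qed
  then show "z \<in> {t *\<^sub>R s | t. 0 \<le> t}" using v by auto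
qed

lemma ray_of_conic_span:
  assumes "finite S" "strongly_convex (conic_span S)" "\<rho> \<in> rays (conic_span S)"
  obtains s where "s \<in> S" "s \<noteq> 0" "\<rho> = {t *\<^sub>R s | t. 0 \<le> t}"
proof -
  have F: "\<rho> face_of conic_span S" and "aff_dim \<rho> = 1" using assms(3) unfolding rays_def by auto
  then have "\<rho> \<noteq> {}" "\<rho> \<noteq> {0}" by auto
  then obtain x where "x \<in> \<rho>" "x \<noteq> 0" by blast
  then obtain s where "s \<in> S" "s \<noteq> 0" "s \<in> \<rho>"
    using face_of_conic_span_contains_generator[OF assms(1) F] by blast
  moreover have "\<rho> = {t *\<^sub>R s | t. 0 \<le> t}"
    using conic_aff_dim_1_eq_halfline[OF conic_conic_span assms(2)
        face_of_conic[OF conic_conic_span F] face_of_imp_subset[OF F]] \<open>aff_dim \<rho> = 1\<close> calculation by blast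
  ultimately show thesis using that by blast
qed

lemma finite_rays_conic_span:
  assumes "finite S" "strongly_convex (conic_span S)"
  shows "finite (rays (conic_span S))"
proof (rule finite_subset)
  show "rays (conic_span S) \<subseteq> (\<lambda>s. {t *\<^sub>R s | t. 0 \<le> t}) ` S"
  proof
    fix \<rho> assume "\<rho> \<in> rays (conic_span S)"
    then obtain s where "s \<in> S" "\<rho> = {t *\<^sub>R s | t. 0 \<le> t}"
      by (rule ray_of_conic_span[OF assms])
    then show "\<rho> \<in> (\<lambda>s. {t *\<^sub>R s | t. 0 \<le> t}) ` S" by blast
  qed
qed (use assms(1) in simp)

lemma lattice_pts_diff: "u \<in> lattice_pts \<Longrightarrow> v \<in> lattice_pts \<Longrightarrow> u - v \<in> lattice_pts"
  unfolding lattice_pts_def by (auto intro: Ints_diff)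

lemma lattice_pts_scaleR_nat: "v \<in> lattice_pts \<Longrightarrow> real k *\<^sub>R v \<in> lattice_pts"
  unfolding lattice_pts_def by (auto intro: Ints_mult)

lemma prim_gen_eqI:
  assumes "u \<in> \<rho>" "u \<in> lattice_pts" "u \<noteq> 0"
    and multiples: "\<forall>v \<in> \<rho> \<inter> lattice_pts. \<exists>k::nat. v = real k *\<^sub>R u"
  shows "prim_gen \<rho> = u"
  unfolding prim_gen_def
proof (rule the_equality)
  fix w
  assume w: "w \<in> \<rho> \<and> w \<in> lattice_pts \<and> w \<noteq> 0 \<and>
    (\<forall>v \<in> \<rho> \<inter> lattice_pts. \<exists>k::nat. v = real k *\<^sub>R w)"
  obtain k :: nat where k: "w = real k *\<^sub>R u" using multiples w by blast
  obtain k' :: nat where "u = real k' *\<^sub>R w" using w assms(1,2) by blast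
  then have "real k' * real k = 1" using k \<open>u \<noteq> 0\<close> by (metis scaleR_cancel_right scaleR_one scaleR_scaleR)
  then have "k = 1" by (metis of_nat_1 of_nat_eq_iff of_nat_mult nat_mult_eq_1_iff)
  then show "w = u" using k by simp
qed (use assms in blast)

lemma lattice_pts_on_halfline_denominator:
  assumes "s \<in> lattice_pts" "s \<noteq> 0"
  obtains a :: nat where "0 < a"
    "\<And>t. 0 \<le> t \<Longrightarrow> t *\<^sub>R s \<in> lattice_pts \<Longrightarrow> \<exists>j::nat. t = real j / real a"
proof -
  obtain i where i: "s $ i \<noteq> 0" using assms(2) by (metis vec_eq_iff zero_index)
  obtain z :: int where z: "s $ i = of_int z"
    using assms(1) unfolding lattice_pts_def by (auto elim: Ints_cases)
  define a where "a = nat \<bar>z\<bar>"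
  have "real a = \<bar>s $ i\<bar>" unfolding a_def z by simp
  have "\<exists>j::nat. t = real j / real a" if t: "0 \<le> t" "t *\<^sub>R s \<in> lattice_pts" for t
  proof -
    obtain q :: int where q: "t * s $ i = of_int q"
      using t(2) unfolding lattice_pts_def by (auto elim: Ints_cases)
    have "real (nat \<bar>q\<bar>) = t * real a"
      unfolding \<open>real a = \<bar>s $ i\<bar>\<close> using t(1) q[symmetric] by (simp add: abs_mult)
    then show ?thesis using i \<open>real a = \<bar>s $ i\<bar>\<close> by (intro exI[of _ "nat \<bar>q\<bar>"]) simp
  qed
  moreover have "0 < a" using i z unfolding a_def by auto
  ultimately show thesis using that by blast
qed

lemma prim_gen_halfline:
  assumes "s \<in> lattice_pts" "s \<noteq> 0"
  shows "\<exists>c>0. prim_gen {t *\<^sub>R s | t. 0 \<le> t} = c *\<^sub>R s"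
proof -
  let ?\<rho> = "{t *\<^sub>R s | t. 0 \<le> t}"
  obtain a :: nat where a: "0 < a"
    "\<And>t. 0 \<le> t \<Longrightarrow> t *\<^sub>R s \<in> lattice_pts \<Longrightarrow> \<exists>j::nat. t = real j / real a"
    using lattice_pts_on_halfline_denominator[OF assms] by blast
  define K where "K = {k::nat. 0 < k \<and> (real k / real a) *\<^sub>R s \<in> lattice_pts}"
  have "a \<in> K" unfolding K_def using a(1) assms(1) by simp
  define k0 where "k0 = (LEAST k. k \<in> K)"
  have "k0 \<in> K" unfolding k0_def using \<open>a \<in> K\<close> by (rule LeastI)
  then have "0 < k0" unfolding K_def by simp
  define u where "u = (real k0 / real a) *\<^sub>R s"
  have u: "u \<in> ?\<rho>" "u \<in> lattice_pts" "u \<noteq> 0"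
    using \<open>k0 \<in> K\<close> \<open>0 < k0\<close> a(1) assms(2) unfolding K_def u_def by auto
  have "\<exists>k::nat. v = real k *\<^sub>R u" if v: "v \<in> ?\<rho> \<inter> lattice_pts" for v
  proof -
    obtain t where t: "v = t *\<^sub>R s" "0 \<le> t" using v by blast
    then obtain j :: nat where j: "t = real j / real a" using a(2) v by blast
    \<comment> \<open>By minimality of k0 the remainder of j modulo k0 must vanish.\<close>
    have j_div_mod: "real j = real (j div k0) * real k0 + real (j mod k0)"
      by (metis div_mult_mod_eq of_nat_add of_nat_mult)
    have "(real (j mod k0) / real a) *\<^sub>R s = v - real (j div k0) *\<^sub>R u"
      unfolding t(1) j u_def j_div_mod by (simp add: add_divide_distrib algebra_simps)
    then have "(real (j mod k0) / real a) *\<^sub>R s \<in> lattice_pts"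
      using v u(2) by (simp add: lattice_pts_diff lattice_pts_scaleR_nat)
    moreover have "j mod k0 \<notin> K"
      using not_less_Least[of "j mod k0" "\<lambda>k. k \<in> K"] \<open>0 < k0\<close> unfolding k0_def by simp
    ultimately have "j mod k0 = 0" unfolding K_def by simp
    then have "v = real (j div k0) *\<^sub>R u"
      unfolding t(1) j u_def using j_div_mod a(1) by (simp add: field_simps)
    then show ?thesis by blast
  qed
  then have "prim_gen ?\<rho> = u" using u by (intro prim_gen_eqI) auto
  then show ?thesis unfolding u_def using \<open>0 < k0\<close> a(1) by (intro exI[of _ "real k0 / real a"]) simp
qed

lemma pointed_conic_span_positive_functional:
  assumes "finite S" "strongly_convex (conic_span S)"
  obtains w where "\<And>s. s \<in> S \<Longrightarrow> s \<noteq> 0 \<Longrightarrow> 0 < w \<bullet> s"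
proof -
  have "0 \<notin> convex hull (S - {0})"
  proof
    assume "0 \<in> convex hull (S - {0})"
    then obtain l where l: "\<forall>x\<in>S - {0}. 0 \<le> l x" "sum l (S - {0}) = 1"
      "(\<Sum>x\<in>S - {0}. l x *\<^sub>R x) = 0"
      using convex_hull_finite[of "S - {0}"] assms(1) by auto
    have "\<exists>s\<in>S - {0}. 0 < l s"
    proof (rule ccontr)
      assume "\<not> (\<exists>s\<in>S - {0}. 0 < l s)"
      then have "\<forall>x\<in>S - {0}. l x = 0" using l(1) by force
      then show False using l(2) by simp
    qed
    then obtain s where s: "s \<in> S - {0}" "0 < l s" by blast
    define y where "y = (\<Sum>x\<in>S - {0} - {s}. l x *\<^sub>R x)"
    have "y \<in> conic_span S" unfolding y_def using assms(1) l(1) by (intro sum_in_conic_span) auto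
    moreover have "y = - (l s *\<^sub>R s)"
      using l(3) s(1) assms(1) unfolding y_def by (simp add: sum.remove eq_neg_iff_add_eq_0 add.commute)
    ultimately have "(1 / l s) *\<^sub>R - (l s *\<^sub>R s) \<in> conic_span S"
      using s(2) by (intro conic_mul[OF conic_conic_span]) auto
    then have "- s \<in> conic_span S" using s(2) by simp
    then show False
      using strongly_convex_minus_mem_imp_zero[OF assms(2)] mem_conic_span[OF assms(1)] s(1) by blast
  qed
  moreover have "closed (convex hull (S - {0}))"
    using assms(1) by (intro compact_imp_closed compact_convex_hull finite_imp_compact) simp
  ultimately obtain w b where wb: "0 < b" "\<forall>x\<in>convex hull (S - {0}). b < w \<bullet> x"
    using separating_hyperplane_closed_0[OF convex_convex_hull] by blast
  show thesis
  proof (rule that)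
    fix s assume "s \<in> S" "s \<noteq> 0"
    then have "b < w \<bullet> s" using wb(2) hull_inc[of s "S - {0}"] by blast
    then show "0 < w \<bullet> s" using wb(1) by simp
  qed
qed

lemma exists_strict_solution_by_perturbation:
  fixes m w :: "'a::real_inner" and g :: "'i \<Rightarrow> 'a" and b :: "'i \<Rightarrow> real"
  assumes "finite P"
    and P: "\<forall>i\<in>P. m \<bullet> g i < b i" and Q: "\<forall>i\<in>Q. b i \<le> m \<bullet> g i"
    and w: "\<forall>i\<in>Q. 0 < w \<bullet> g i"
  shows "\<exists>m'. (\<forall>i\<in>P. m' \<bullet> g i < b i) \<and> (\<forall>i\<in>Q. b i < m' \<bullet> g i)"
proof -
  have "\<forall>\<^sub>F \<epsilon> in at_right 0. (m + \<epsilon> *\<^sub>R w) \<bullet> g i < b i" if "i \<in> P" for i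
  proof (rule order_tendstoD(2))
    show "((\<lambda>\<epsilon>. (m + \<epsilon> *\<^sub>R w) \<bullet> g i) \<longlongrightarrow> m \<bullet> g i) (at_right 0)"
      by (auto intro!: tendsto_eq_intros)
  qed (use P that in blast)
  then have "\<forall>\<^sub>F \<epsilon> in at_right 0. 0 < \<epsilon> \<and> (\<forall>i\<in>P. (m + \<epsilon> *\<^sub>R w) \<bullet> g i < b i)"
    using \<open>finite P\<close>
    by (auto intro: eventually_conj eventually_at_right_less simp: eventually_ball_finite_distrib)
  then obtain \<epsilon> :: real where "0 < \<epsilon>" and "\<forall>i\<in>P. (m + \<epsilon> *\<^sub>R w) \<bullet> g i < b i"
    using eventually_happens trivial_limit_at_right_real by blast
  moreover have "b i < (m + \<epsilon> *\<^sub>R w) \<bullet> g i" if "i \<in> Q" for i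
  proof -
    have "0 < \<epsilon> * (w \<bullet> g i)" using w that \<open>0 < \<epsilon>\<close> by simp
    moreover have "b i \<le> m \<bullet> g i" using Q that by blast
    ultimately show ?thesis by (simp add: inner_add_left)
  qed
  ultimately show ?thesis by blast
qed

lemma finite_rays:
  assumes "rational_polyhedral_cone \<sigma>" "strongly_convex \<sigma>"
  shows "finite (rays \<sigma>)"
  using assms finite_rays_conic_span unfolding rational_polyhedral_cone_def by blast

lemma rays_positive_functional:
  assumes "rational_polyhedral_cone \<sigma>" "strongly_convex \<sigma>"
  obtains w where "\<And>\<rho>. \<rho> \<in> rays \<sigma> \<Longrightarrow> 0 < w \<bullet> prim_gen \<rho>"
proof -
  obtain S where S: "finite S" "S \<subseteq> lattice_pts" "\<sigma> = conic_span S"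
    using assms(1) unfolding rational_polyhedral_cone_def by blast
  obtain w where w: "\<And>s. s \<in> S \<Longrightarrow> s \<noteq> 0 \<Longrightarrow> 0 < w \<bullet> s"
    using pointed_conic_span_positive_functional S(1) assms(2) S(3) by blast
  show thesis
  proof (rule that)
    fix \<rho> assume "\<rho> \<in> rays \<sigma>"
    then obtain s where s: "s \<in> S" "s \<noteq> 0" "\<rho> = {t *\<^sub>R s | t. 0 \<le> t}"
      using ray_of_conic_span[OF S(1)] assms(2) S(3) by blast
    then obtain c where "0 < c" "prim_gen \<rho> = c *\<^sub>R s"
      using prim_gen_halfline S(2) by blast
    then show "0 < w \<bullet> prim_gen \<rho>" using w s by simp
  qed
qed

lemma C_s_subset_C_ss: "C_s \<sigma> nr Pi_set \<subseteq> C_ss \<sigma> nr Pi_set"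
  unfolding C_s_def C_ss_def by (auto intro: less_imp_le)

theorem mainTheorem5:
  fixes \<sigma> :: "(real^'n) set" and nr :: "(real^'n) set \<Rightarrow> int"
    and Pi_set :: "(real^'n) set set"
  assumes "rational_polyhedral_cone \<sigma>" and "strongly_convex \<sigma>"
    and "dim \<sigma> = CARD('n)"
    and "Pi_set \<subseteq> rays \<sigma>"
  shows "C_ss \<sigma> nr Pi_set \<noteq> {} \<longleftrightarrow> C_s \<sigma> nr Pi_set \<noteq> {}"
proof
  assume "C_s \<sigma> nr Pi_set \<noteq> {}"
  then show "C_ss \<sigma> nr Pi_set \<noteq> {}" using C_s_subset_C_ss by blast
next
  assume "C_ss \<sigma> nr Pi_set \<noteq> {}"
  then obtain m where m: "m \<in> C_ss \<sigma> nr Pi_set" by blast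
  have "finite Pi_set" using finite_rays[OF assms(1,2)] assms(4) finite_subset by blast
  obtain w where "\<And>\<rho>. \<rho> \<in> rays \<sigma> \<Longrightarrow> 0 < w \<bullet> prim_gen \<rho>"
    using rays_positive_functional[OF assms(1,2)] by blast
  then have "\<exists>m'. m' \<in> C_s \<sigma> nr Pi_set"
    using exists_strict_solution_by_perturbation[OF \<open>finite Pi_set\<close>, of m prim_gen
        "\<lambda>\<rho>. - of_int (nr \<rho>)" "rays \<sigma> - Pi_set" w] m
    unfolding C_ss_def C_s_def by auto
  then show "C_s \<sigma> nr Pi_set \<noteq> {}" by blast
qed

end
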